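(* There exists an anonymous hedonic game with exactly $n=15$ agents in which every agent has strict and generally single-peaked preferences over coalition sizes, and which admits no individually stable partition.
   Context: A hedonic game on agent set $N=[n]$ assigns to each agent $i$ a weak order $\succsim_i$ over the coalitions (subsets of $N$) containing $i$; a partition $\pi$ of $N$ is evaluated by agent $i$ via the coalition $\pi(i)$ containing $i$. In an anonymous hedonic game (AHG), each agent $i$ has a weak order $\succsim_i^S$ over sizes $\{1,\dots,n\}$ and $\pi(i)\succsim_i\pi'(i)$ iff $|\pi(i)|\succsim_i^S|\pi'(i)|$. Preferences are strict if these orders are linear. An AHG is generally single-peaked if there is a linear order $>$ on $[n]$ such that for every agent $i$ and all $x,y,z\in[n]$ with $x>y>z$ or $z>y>x$, $x\succ_i^S y$ implies $y\succsim_i^S z$. An IS (individually stable) deviation of agent $i$ from partition $\pi$ to partition $\pi'$ is a move of $i$ alone from $\pi(i)$ into another coalition of $\pi$ or into a new singleton (all other agents keep their coalitions apart from $i$) such that $\pi'(i)\succ_i\pi(i)$ and $\pi'(j)\succsim_j\pi(j)$ for every $j\in\pi'(i)\setminus\{i\}$. A partition is individually stable (IS) if no IS deviation is possible from it. *)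

theory Defs
  imports Main "HOL-Library.Disjoint_Sets"
begin

(* Agents are 1..n.  pref i x y  means  x \<succeq>_i^S y  (agent i weakly prefers size x to size y). *)

definition agents :: "nat \<Rightarrow> nat set" where
  "agents n = {1..n}"

definition strict_pref :: "(nat \<Rightarrow> nat \<Rightarrow> nat \<Rightarrow> bool) \<Rightarrow> nat \<Rightarrow> nat \<Rightarrow> nat \<Rightarrow> bool" where
  "strict_pref pref i x y \<longleftrightarrow> pref i x y \<and> \<not> pref i y x"

definition is_AHG :: "nat \<Rightarrow> (nat \<Rightarrow> nat \<Rightarrow> nat \<Rightarrow> bool) \<Rightarrow> bool" where
  "is_AHG n pref \<longleftrightarrow> (\<forall>i\<in>agents n.
      (\<forall>x\<in>{1..n}. pref i x x) \<and>
      (\<forall>x\<in>{1..n}. \<forall>y\<in>{1..n}. pref i x y \<or> pref i y x) \<and>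
      (\<forall>x\<in>{1..n}. \<forall>y\<in>{1..n}. \<forall>z\<in>{1..n}. pref i x y \<longrightarrow> pref i y z \<longrightarrow> pref i x z))"

definition strict_prefs :: "nat \<Rightarrow> (nat \<Rightarrow> nat \<Rightarrow> nat \<Rightarrow> bool) \<Rightarrow> bool" where
  "strict_prefs n pref \<longleftrightarrow> (\<forall>i\<in>agents n. \<forall>x\<in>{1..n}. \<forall>y\<in>{1..n}.
      pref i x y \<longrightarrow> pref i y x \<longrightarrow> x = y)"

definition gen_single_peaked :: "nat \<Rightarrow> (nat \<Rightarrow> nat \<Rightarrow> nat \<Rightarrow> bool) \<Rightarrow> bool" where
  "gen_single_peaked n pref \<longleftrightarrow> (\<exists>gt :: nat \<Rightarrow> nat \<Rightarrow> bool.
      (\<forall>x\<in>{1..n}. \<not> gt x x) \<and>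
      (\<forall>x\<in>{1..n}. \<forall>y\<in>{1..n}. x \<noteq> y \<longrightarrow> gt x y \<or> gt y x) \<and>
      (\<forall>x\<in>{1..n}. \<forall>y\<in>{1..n}. \<forall>z\<in>{1..n}. gt x y \<longrightarrow> gt y z \<longrightarrow> gt x z) \<and>
      (\<forall>i\<in>agents n. \<forall>x\<in>{1..n}. \<forall>y\<in>{1..n}. \<forall>z\<in>{1..n}.
          ((gt x y \<and> gt y z) \<or> (gt z y \<and> gt y x)) \<longrightarrow>
          strict_pref pref i x y \<longrightarrow> pref i y z))"

definition coal :: "nat set set \<Rightarrow> nat \<Rightarrow> nat set" where
  "coal P i = (THE C. C \<in> P \<and> i \<in> C)"

(* IS deviation of agent i from partition P: i joins a coalition C of P not containing i,
   or C = {} (new singleton). *)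
definition IS_deviation :: "nat \<Rightarrow> (nat \<Rightarrow> nat \<Rightarrow> nat \<Rightarrow> bool) \<Rightarrow> nat set set \<Rightarrow> nat \<Rightarrow> bool" where
  "IS_deviation n pref P i \<longleftrightarrow> i \<in> agents n \<and>
     (\<exists>C \<in> P \<union> {{}}. i \<notin> C \<and>
        strict_pref pref i (card C + 1) (card (coal P i)) \<and>
        (\<forall>j\<in>C. pref j (card C + 1) (card C)))"

definition individually_stable :: "nat \<Rightarrow> (nat \<Rightarrow> nat \<Rightarrow> nat \<Rightarrow> bool) \<Rightarrow> nat set set \<Rightarrow> bool" where
  "individually_stable n pref P \<longleftrightarrow>
     partition_on (agents n) P \<and> \<not> (\<exists>i. IS_deviation n pref P i)"

end

theory Submission
  imports Defs
begin

(* Agents 5-15 (the majority) rank the sizes 13 > 12 > ... > 1 > 14 > 15; agents 1 and 2 rank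
   3 > 2 > 1 first, agent 4 ranks 13 > 3 > 2 > 1 first and agent 3 ranks 2 > 3 > 13 > 12 > 1
   first. Along the axis 4, 5, ..., 13, 3, 2, 1, 14, 15 the ranks of every agent first fall and
   then rise, which is general single-peakedness.

   In an individually stable partition nobody is worse off than alone, and a coalition of size 13
   would be {3..15}, leaving agents 1 and 2 a deviation. So all coalitions have at most 12
   members, every majority agent wants to move to any larger coalition, and a coalition refuses a
   newcomer only if it has at most 3 members, one of them among agents 1-4. If the majority were
   split, every majority agent would sit in a coalition of size at most 3, all but one of these
   containing one of agents 1-4, which leaves room for only 10 majority agents. Hence the majority
   forms a single coalition. If agent 3 belongs to it, agent 4 joins it; otherwise agents 1-4 are
   left among themselves, where agent 3 (who would join the majority from a singleton) and the
   minority agents 1, 2, 4 (who all rank 3 > 2 > 1) always find a deviation. *)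

section \<open>Positions in lists\<close>

definition position :: "'a list \<Rightarrow> 'a \<Rightarrow> nat" where
  "position xs x = length (takeWhile ((\<noteq>) x) xs)"

lemma position_less_length: "x \<in> set xs \<Longrightarrow> position xs x < length xs"
  unfolding position_def by (induction xs) auto

lemma nth_position: "x \<in> set xs \<Longrightarrow> xs ! position xs x = x"
  unfolding position_def by (induction xs) auto

lemma position_inj: "x \<in> set xs \<Longrightarrow> y \<in> set xs \<Longrightarrow> position xs x = position xs y \<Longrightarrow> x = y"
  by (metis nth_position)

definition valley :: "'a::linorder list \<Rightarrow> bool" where
  "valley ys \<longleftrightarrow> (\<exists>m. sorted_wrt (>) (take (Suc m) ys) \<and> sorted_wrt (<) (drop m ys))"

lemma valley_nth_between:
  assumes "valley ys" and "a < length ys" and "c < length ys"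
    and between: "a < b \<and> b < c \<or> c < b \<and> b < a" and "ys ! a < ys ! b"
  shows "ys ! b < ys ! c"
proof -
  obtain m where dec: "sorted_wrt (>) (take (Suc m) ys)" and inc: "sorted_wrt (<) (drop m ys)"
    using \<open>valley ys\<close> unfolding valley_def by blast
  have descending: "ys ! k < ys ! j" if "j < k" "k \<le> m" "k < length ys" for j k
    using sorted_wrt_nth_less[OF dec, of j k] that by simp
  have ascending: "ys ! j < ys ! k" if "m \<le> j" "j < k" "k < length ys" for j k
    using sorted_wrt_nth_less[OF inc, of "j - m" "k - m"] that by simp
  have "b < length ys"
    using between assms(2,3) by auto
  show ?thesis
  proof (cases "b \<le> m")
    case True
    then have "\<not> a < b"
      using descending[of a b] \<open>b < length ys\<close> \<open>ys ! a < ys ! b\<close> by auto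
    then have "c < b"
      using between by auto
    then show ?thesis
      using descending[of c b] True \<open>b < length ys\<close> by auto
  next
    case False
    then have "\<not> b < a"
      using ascending[of b a] assms(2) \<open>ys ! a < ys ! b\<close> by auto
    then have "b < c"
      using between by auto
    then show ?thesis
      using ascending[of b c] False assms(3) by auto
  qed
qed

section \<open>Coalitions and deviations\<close>

definition welcoming :: "(nat \<Rightarrow> nat \<Rightarrow> nat \<Rightarrow> bool) \<Rightarrow> nat set \<Rightarrow> bool" where
  "welcoming pref C \<longleftrightarrow> (\<forall>j\<in>C. pref j (card C + 1) (card C))"

lemma IS_deviationI:
  "i \<in> agents n \<Longrightarrow> C \<in> P \<Longrightarrow> i \<notin> C \<Longrightarrow> strict_pref pref i (card C + 1) (card (coal P i)) \<Longrightarrow>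
    welcoming pref C \<Longrightarrow> IS_deviation n pref P i"
  unfolding IS_deviation_def welcoming_def by blast

lemma IS_deviation_to_singleton:
  "i \<in> agents n \<Longrightarrow> strict_pref pref i 1 (card (coal P i)) \<Longrightarrow> IS_deviation n pref P i"
  unfolding IS_deviation_def by force

lemma coal_eq:
  assumes "partition_on A P" and "C \<in> P" and "i \<in> C"
  shows "coal P i = C"
  unfolding coal_def
proof (rule the_equality)
  show "D = C" if "D \<in> P \<and> i \<in> D" for D
    using that assms disjointD[OF partition_onD2[OF assms(1)]] by blast
qed (use assms in simp)

lemma coal_mem:
  assumes "partition_on A P" and "i \<in> A"
  shows "coal P i \<in> P" and "i \<in> coal P i"
proof -
  obtain C where "C \<in> P" "i \<in> C"
    using assms partition_onD1 by blast
  then show "coal P i \<in> P" "i \<in> coal P i"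
    using coal_eq[OF assms(1)] by simp_all
qed

lemma coal_disjoint:
  assumes "partition_on A P" and "X \<in> P" and "i \<in> A - X"
  shows "coal P i \<inter> X = {}"
  using assms coal_mem[OF assms(1)] partition_onD2[OF assms(1)] by (metis DiffD1 DiffD2 disjointD)

section \<open>The game\<close>

definition size_order :: "nat \<Rightarrow> nat list" where
  "size_order i =
     (if i \<in> {1, 2} then [3, 2, 1, 14, 15, 13, 12, 11, 10, 9, 8, 7, 6, 5, 4]
      else if i = 3 then [2, 3, 13, 12, 1, 11, 10, 9, 8, 7, 6, 5, 4, 14, 15]
      else if i = 4 then [13, 3, 2, 1, 12, 11, 10, 9, 8, 7, 6, 5, 4, 14, 15]
      else [13, 12, 11, 10, 9, 8, 7, 6, 5, 4, 3, 2, 1, 14, 15])"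

definition size_rank :: "nat \<Rightarrow> nat \<Rightarrow> nat" where
  "size_rank i = position (size_order i)"

definition pref15 :: "nat \<Rightarrow> nat \<Rightarrow> nat \<Rightarrow> bool" where
  "pref15 i x y \<longleftrightarrow> size_rank i x \<le> size_rank i y"

definition axis :: "nat list" where
  "axis = [4, 5, 6, 7, 8, 9, 10, 11, 12, 13, 3, 2, 1, 14, 15]"

lemma atLeastAtMost_1_15: "{1..15::nat} = {1, 2, 3, 4, 5, 6, 7, 8, 9, 10, 11, 12, 13, 14, 15}"
  by code_simp

lemma set_size_order: "set (size_order i) = {1..15}"
  unfolding atLeastAtMost_1_15 size_order_def by auto

lemma set_axis: "set axis = {1..15}"
  unfolding atLeastAtMost_1_15 axis_def by auto

lemma size_rank_inj: "s \<in> {1..15} \<Longrightarrow> t \<in> {1..15} \<Longrightarrow> size_rank i s = size_rank i t \<Longrightarrow> s = t"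
  using position_inj set_size_order unfolding size_rank_def by metis

lemma valley_size_ranks_along_axis: "valley (map (size_rank i) axis)"
  unfolding valley_def
  by (rule exI[of _ "position axis (hd (size_order i))"])
    (cases "i \<in> {1, 2}"; cases "i = 3"; cases "i = 4";
      simp add: size_rank_def size_order_def position_def axis_def)

lemma is_AHG_pref15: "is_AHG 15 pref15"
  unfolding is_AHG_def pref15_def by auto

lemma strict_prefs_pref15: "strict_prefs 15 pref15"
  unfolding strict_prefs_def pref15_def agents_def using size_rank_inj by (meson antisym)

lemma gen_single_peaked_pref15: "gen_single_peaked 15 pref15"
  unfolding gen_single_peaked_def
proof (intro exI[of _ "\<lambda>x y. position axis y < position axis x"] conjI ballI impI)
  show "x \<noteq> y \<Longrightarrow> position axis y < position axis x \<or> position axis x < position axis y"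
    if "x \<in> {1..15}" "y \<in> {1..15}" for x y
    using that by (metis linorder_neqE_nat position_inj set_axis)
next
  fix i x y z :: nat
  assume "x \<in> {1..15}" "y \<in> {1..15}" "z \<in> {1..15}"
    and between: "position axis y < position axis x \<and> position axis z < position axis y \<or>
      position axis y < position axis z \<and> position axis x < position axis y"
    and "strict_pref pref15 i x y"
  then have "x \<in> set axis" "y \<in> set axis" "z \<in> set axis" and "size_rank i x < size_rank i y"
    by (auto simp: set_axis strict_pref_def pref15_def)
  with between have "size_rank i y < size_rank i z"
    using valley_nth_between[OF valley_size_ranks_along_axis[of i],
        of "position axis x" "position axis z" "position axis y"]
    by (auto simp: position_less_length nth_position)
  then show "pref15 i y z"
    by (simp add: pref15_def)
qed auto

lemma size_rank_acceptable:
  assumes "s \<in> {1..15}" and "size_rank i s \<le> size_rank i 1"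
  shows "s \<le> 13"
    and "i \<in> {1, 2} \<Longrightarrow> s \<le> 3"
    and "i = 3 \<Longrightarrow> s \<le> 3 \<or> s = 12 \<or> s = 13"
    and "i = 4 \<Longrightarrow> s \<le> 3 \<or> s = 13"
  using assms unfolding atLeastAtMost_1_15
  by (cases "i \<in> {1, 2}"; cases "i = 3"; cases "i = 4";
      auto simp: size_rank_def size_order_def position_def)+

lemma size_rank_increase:
  assumes "s \<in> {1..15}" and "s \<le> 12" and "size_rank i s \<le> size_rank i 1"
    and "size_rank i s < size_rank i (s + 1)"
  shows "s \<le> 3 \<and> i \<in> {1..4}"
  using assms unfolding atLeastAtMost_1_15
  by (cases "i \<in> {1, 2}"; cases "i = 3"; cases "i = 4";
      auto simp: size_rank_def size_order_def position_def)

lemma size_rank_majority: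
  assumes "e \<in> {5..15}" and "s \<in> {1..15}" and "s \<le> 13"
  shows "size_rank e s = 13 - s"
  using assms(2-3) unfolding atLeastAtMost_1_15
  by (elim insertE emptyE; use assms(1) in \<open>simp add: size_rank_def size_order_def position_def\<close>)

lemma size_rank_minority:
  assumes "k \<in> {1, 2, 4}" and "1 \<le> s" and "s < t" and "t \<le> 3"
  shows "size_rank k t < size_rank k s"
proof -
  have "size_rank k 3 < size_rank k 2" and "size_rank k 2 < size_rank k 1"
    using assms(1) by (elim insertE emptyE; simp add: size_rank_def size_order_def position_def)+
  moreover have "(s, t) \<in> {(1, 2), (1, 3), (2, 3)}"
    using assms(2-4) by auto
  ultimately show ?thesis
    by auto
qed

lemma welcoming_minority_block:
  assumes "C \<subseteq> {1, 2, 4}" and "1 \<le> card C" and "card C \<le> 2"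
  shows "welcoming pref15 C"
  unfolding welcoming_def pref15_def
proof
  fix j
  assume "j \<in> C"
  then show "size_rank j (card C + 1) \<le> size_rank j (card C)"
    using assms size_rank_minority[of j "card C" "card C + 1"] by fastforce
qed

section \<open>An individually stable partition of the game\<close>

locale IS_partition15 =
  fixes P :: "nat set set"
  assumes partition: "partition_on {1..15} P"
    and no_deviation: "\<not> IS_deviation 15 pref15 P i"
begin

lemma coal_in_partition: "i \<in> {1..15} \<Longrightarrow> coal P i \<in> P"
  using coal_mem(1)[OF partition] .

lemma in_coal: "i \<in> {1..15} \<Longrightarrow> i \<in> coal P i"
  using coal_mem(2)[OF partition] .

lemma mem_coal_iff: "i \<in> {1..15} \<Longrightarrow> j \<in> {1..15} \<Longrightarrow> j \<in> coal P i \<longleftrightarrow> coal P j = coal P i"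
  using coal_eq[OF partition coal_in_partition] in_coal by metis

lemma coal_disjoint_coal:
  "i \<in> {1..15} \<Longrightarrow> j \<in> {1..15} \<Longrightarrow> j \<notin> coal P i \<Longrightarrow> coal P j \<inter> coal P i = {}"
  using coal_disjoint[OF partition coal_in_partition] by blast

lemma block_subset: "C \<in> P \<Longrightarrow> C \<subseteq> {1..15}"
  using partition_onD1[OF partition] by blast

lemma finite_block: "C \<in> P \<Longrightarrow> finite C"
  using block_subset finite_subset by blast

lemma card_block: "C \<in> P \<Longrightarrow> card C \<in> {1..15}"
proof -
  assume C: "C \<in> P"
  then have "C \<noteq> {}"
    using partition_onD3[OF partition] by blast
  moreover have "card C \<le> card {1..15::nat}"
    using C block_subset by (intro card_mono) auto
  ultimately show ?thesis
    using finite_block[OF C] by (simp add: Suc_le_eq card_gt_0_iff)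
qed

lemma no_welcoming_improvement:
  assumes "i \<in> {1..15}" and "C \<in> P" and "i \<notin> C" and "welcoming pref15 C"
  shows "size_rank i (card (coal P i)) \<le> size_rank i (card C + 1)"
proof (rule ccontr)
  assume "\<not> ?thesis"
  then have "IS_deviation 15 pref15 P i"
    using assms by (intro IS_deviationI) (auto simp: agents_def strict_pref_def pref15_def)
  then show False
    using no_deviation by blast
qed

lemma individually_rational:
  assumes "i \<in> {1..15}"
  shows "size_rank i (card (coal P i)) \<le> size_rank i 1"
proof (rule ccontr)
  assume "\<not> ?thesis"
  then have "IS_deviation 15 pref15 P i"
    using assms by (intro IS_deviation_to_singleton) (auto simp: agents_def strict_pref_def pref15_def)
  then show False
    using no_deviation by blast
qed

lemma card_coal_acceptable:
  assumes "i \<in> {1..15}"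
  shows "card (coal P i) \<le> 13"
    and "i \<in> {1, 2} \<Longrightarrow> card (coal P i) \<le> 3"
    and "i = 3 \<Longrightarrow> card (coal P i) \<le> 3 \<or> card (coal P i) = 12 \<or> card (coal P i) = 13"
    and "i = 4 \<Longrightarrow> card (coal P i) \<le> 3 \<or> card (coal P i) = 13"
  using size_rank_acceptable[OF card_block[OF coal_in_partition] individually_rational] assms
  by auto

lemma block_of_size_13: "C \<in> P \<Longrightarrow> card C = 13 \<Longrightarrow> C = {3..15}"
proof -
  assume C: "C \<in> P" and card_C: "card C = 13"
  have not_in_C: "k \<notin> C" if "k \<in> {1, 2}" for k
  proof
    assume "k \<in> C"
    then have "coal P k = C"
      by (rule coal_eq[OF partition C])
    then show False
      using card_coal_acceptable(2)[of k] that card_C by auto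
  qed
  have "C \<subseteq> {3..15}"
  proof
    fix x
    assume "x \<in> C"
    then have "x \<in> {1..15}" and "x \<notin> {1, 2}"
      using block_subset[OF C] not_in_C by auto
    then show "x \<in> {3..15}"
      by auto
  qed
  then show "C = {3..15}"
    using card_C by (simp add: card_subset_eq)
qed

lemma no_block_of_size_13: "C \<in> P \<Longrightarrow> card C \<noteq> 13"
proof
  assume C: "C \<in> P" and card_C: "card C = 13"
  then have C_eq: "C = {3..15}"
    by (rule block_of_size_13)
  have coal_12: "coal P k \<subseteq> {1, 2}" if "k \<in> {1, 2}" for k
  proof -
    have "k \<in> {1..15} - C"
      using that C_eq by auto
    then show ?thesis
      using coal_disjoint[OF partition C] block_subset[OF coal_in_partition, of k] C_eq by fastforce
  qed
  show False
  proof (cases "coal P 1 = coal P 2")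
    case True
    then have coal_1: "coal P 1 = {1, 2}"
      using coal_12[of 1] in_coal[of 1] in_coal[of 2] by auto
    have "welcoming pref15 (coal P 1)"
      unfolding coal_1 by (simp add: welcoming_def pref15_def size_rank_def size_order_def position_def)
    then have "size_rank 3 (card (coal P 3)) \<le> size_rank 3 (card (coal P 1) + 1)"
      using coal_in_partition[of 1] coal_1 by (intro no_welcoming_improvement) auto
    moreover have "coal P 3 = C"
      using coal_eq[OF partition C] C_eq by simp
    ultimately show False
      using card_C coal_1 by (simp add: size_rank_def size_order_def position_def)
  next
    case False
    then have coal_1: "coal P 1 = {1}" and coal_2: "coal P 2 = {2}"
      using coal_12[of 1] coal_12[of 2] in_coal[of 1] in_coal[of 2] mem_coal_iff[of 1 2] mem_coal_iff[of 2 1]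
      by auto
    have "welcoming pref15 (coal P 2)"
      unfolding coal_2 by (simp add: welcoming_def pref15_def size_rank_def size_order_def position_def)
    then have "size_rank 1 (card (coal P 1)) \<le> size_rank 1 (card (coal P 2) + 1)"
      using coal_in_partition[of 2] coal_2 by (intro no_welcoming_improvement) auto
    then show False
      using coal_1 coal_2 by (simp add: size_rank_def size_order_def position_def)
  qed
qed

lemma card_block_le_12: "C \<in> P \<Longrightarrow> card C \<le> 12"
proof -
  assume C: "C \<in> P"
  then obtain j where "j \<in> C"
    using partition_onD3[OF partition] by (metis ex_in_conv)
  then have "j \<in> {1..15}" and "coal P j = C"
    using block_subset[OF C] coal_eq[OF partition C] by auto
  then show ?thesis
    using card_coal_acceptable(1)[of j] no_block_of_size_13[OF C] by fastforce
qed

lemma minority_card_le_3: "k \<in> {1, 2, 4} \<Longrightarrow> card (coal P k) \<le> 3"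
  using card_coal_acceptable(2,4)[of k] no_block_of_size_13[OF coal_in_partition, of k] by auto

lemma not_welcoming_block:
  assumes C: "C \<in> P" and "\<not> welcoming pref15 C"
  shows "card C \<le> 3 \<and> C \<inter> {1..4} \<noteq> {}"
proof -
  obtain j where "j \<in> C" and worse: "size_rank j (card C) < size_rank j (card C + 1)"
    using assms(2) by (auto simp: welcoming_def pref15_def not_le)
  then have "j \<in> {1..15}" and "coal P j = C"
    using block_subset[OF C] coal_eq[OF partition C] by auto
  then have "card C \<le> 3 \<and> j \<in> {1..4}"
    using size_rank_increase[OF card_block[OF C] card_block_le_12[OF C] _ worse] individually_rational
    by metis
  then show ?thesis
    using \<open>j \<in> C\<close> by blast
qed

lemma welcoming_block_smaller:
  assumes e: "e \<in> {5..15}" and Y: "Y \<in> P" "e \<notin> Y" and "welcoming pref15 Y"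
  shows "card Y < card (coal P e)"
proof (rule ccontr)
  assume "\<not> ?thesis"
  moreover have "e \<in> {1..15}"
    using e by simp
  moreover note card_block[OF coal_in_partition] card_block[OF Y(1)] card_block_le_12[OF Y(1)]
  ultimately have "size_rank e (card Y + 1) < size_rank e (card (coal P e))"
    using e by (simp add: size_rank_majority)
  then show False
    using no_welcoming_improvement[OF \<open>e \<in> {1..15}\<close> Y \<open>welcoming pref15 Y\<close>] by simp
qed

lemma minority_free_block_smaller:
  assumes d: "d \<in> {5..15}" "coal P d \<inter> {1..4} = {}" and d': "d' \<in> {5..15}" "coal P d' \<noteq> coal P d"
  shows "card (coal P d) < card (coal P d')"
proof -
  have "d \<in> {1..15}" and "d' \<in> {1..15}"
    using d d' by auto
  then have "welcoming pref15 (coal P d)"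
    using not_welcoming_block[OF coal_in_partition] d(2) by blast
  moreover have "d' \<notin> coal P d"
    using mem_coal_iff \<open>d \<in> {1..15}\<close> \<open>d' \<in> {1..15}\<close> d'(2) by auto
  ultimately show ?thesis
    using welcoming_block_smaller[OF d'(1) coal_in_partition] \<open>d \<in> {1..15}\<close> by blast
qed

lemma majority_split_small:
  assumes "e \<in> {5..15}" and "e' \<in> {5..15}" and "coal P e \<noteq> coal P e'" and d: "d \<in> {5..15}"
  shows "card (coal P d) \<le> 3"
proof -
  obtain d' where d': "d' \<in> {5..15}" and split: "coal P d' \<noteq> coal P d"
    using assms by metis
  have "d \<in> {1..15}" and "d' \<in> {1..15}"
    using d d' by auto
  then have "d \<notin> coal P d'" and "d' \<notin> coal P d"
    using split mem_coal_iff by auto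
  show ?thesis
  proof (cases "card (coal P d') \<le> card (coal P d)")
    case True
    then have "\<not> welcoming pref15 (coal P d)"
      using welcoming_block_smaller[OF d' coal_in_partition \<open>d' \<notin> coal P d\<close>] \<open>d \<in> {1..15}\<close>
      by fastforce
    then show ?thesis
      using not_welcoming_block[OF coal_in_partition[OF \<open>d \<in> {1..15}\<close>]] by blast
  next
    case False
    then have "\<not> welcoming pref15 (coal P d')"
      using welcoming_block_smaller[OF d coal_in_partition \<open>d \<notin> coal P d'\<close>] \<open>d' \<in> {1..15}\<close>
      by fastforce
    then show ?thesis
      using not_welcoming_block[OF coal_in_partition[OF \<open>d' \<in> {1..15}\<close>]] False by linarith
  qed
qed

lemma majority_split_free_block:
  assumes e: "e \<in> {5..15}" and e': "e' \<in> {5..15}" and split: "coal P e \<noteq> coal P e'"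
  obtains W where "finite W" and "card W \<le> 2"
    and "\<And>d. d \<in> {5..15} \<Longrightarrow> coal P d \<inter> {1..4} = {} \<Longrightarrow> coal P d = W"
proof (cases "\<exists>d\<in>{5..15}. coal P d \<inter> {1..4} = {}")
  case True
  then obtain d where d: "d \<in> {5..15}" "coal P d \<inter> {1..4} = {}"
    by blast
  obtain d' where d': "d' \<in> {5..15}" "coal P d' \<noteq> coal P d"
    using e e' split by metis
  show ?thesis
  proof (rule that[of "coal P d"])
    show "finite (coal P d)"
      using finite_block coal_in_partition d(1) by simp
    show "card (coal P d) \<le> 2"
      using minority_free_block_smaller[OF d d'] majority_split_small[OF e e' split d'(1)] by simp
    show "coal P d'' = coal P d" if d'': "d'' \<in> {5..15}" "coal P d'' \<inter> {1..4} = {}" for d''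
    proof (rule ccontr)
      assume "coal P d'' \<noteq> coal P d"
      then show False
        using minority_free_block_smaller[OF d'' d(1)] minority_free_block_smaller[OF d d''(1)]
        by fastforce
    qed
  qed
next
  case False
  then show ?thesis
    by (intro that[of "{}"]) auto
qed

lemma majority_split_minority_block:
  assumes "e \<in> {5..15}" and "e' \<in> {5..15}" and "coal P e \<noteq> coal P e'" and k: "k \<in> {1..4}"
  shows "card (coal P k - {1..4}) \<le> 2"
proof (cases "coal P k - {1..4} = {}")
  case False
  then obtain d where d: "d \<in> coal P k" "d \<notin> {1..4}"
    by blast
  have "k \<in> {1..15}"
    using k by simp
  then have "d \<in> {5..15}"
    using d block_subset[OF coal_in_partition] by fastforce
  then have "coal P k = coal P d"
    using mem_coal_iff \<open>k \<in> {1..15}\<close> d(1) by auto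
  then have "card (coal P k) \<le> 3"
    using majority_split_small[OF assms(1-3) \<open>d \<in> {5..15}\<close>] by simp
  moreover have "card (coal P k - {1..4}) < card (coal P k)"
    using k in_coal[OF \<open>k \<in> {1..15}\<close>] finite_block[OF coal_in_partition[OF \<open>k \<in> {1..15}\<close>]]
    by (intro psubset_card_mono) auto
  ultimately show ?thesis
    by simp
next
  case True
  then show ?thesis
    unfolding True by simp
qed

lemma majority_covered:
  assumes free: "\<And>d. d \<in> {5..15} \<Longrightarrow> coal P d \<inter> {1..4} = {} \<Longrightarrow> coal P d = W"
  shows "{5..15} \<subseteq> W \<union> (\<Union>k\<in>{1..4}. coal P k - {1..4})"
proof
  fix d :: nat
  assume d: "d \<in> {5..15}"
  show "d \<in> W \<union> (\<Union>k\<in>{1..4}. coal P k - {1..4})"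
  proof (cases "coal P d \<inter> {1..4} = {}")
    case True
    then show ?thesis
      using free[OF d] in_coal[of d] d by auto
  next
    case False
    then obtain k where "k \<in> coal P d" "k \<in> {1..4}"
      by blast
    then have "d \<in> coal P k"
      using mem_coal_iff[of d k] mem_coal_iff[of k d] d by auto
    then show ?thesis
      using \<open>k \<in> {1..4}\<close> d by auto
  qed
qed

lemma majority_together:
  assumes e: "e \<in> {5..15}" and e': "e' \<in> {5..15}"
  shows "coal P e = coal P e'"
proof (rule ccontr)
  assume split: "coal P e \<noteq> coal P e'"
  obtain W where "finite W" and "card W \<le> 2"
    and free: "\<And>d. d \<in> {5..15} \<Longrightarrow> coal P d \<inter> {1..4} = {} \<Longrightarrow> coal P d = W"
    using majority_split_free_block[OF e e' split] by blast
  have "{5..15} \<subseteq> W \<union> (\<Union>k\<in>{1..4}. coal P k - {1..4})"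
    using free by (rule majority_covered)
  then have "card {5..15::nat} \<le> card (W \<union> (\<Union>k\<in>{1..4}. coal P k - {1..4}))"
    using \<open>finite W\<close> finite_block[OF coal_in_partition] by (intro card_mono) auto
  also have "\<dots> \<le> card W + card (\<Union>k\<in>{1..4}. coal P k - {1..4})"
    by (rule card_Un_le)
  also have "\<dots> \<le> card W + (\<Sum>k\<in>{1..4}. card (coal P k - {1..4}))"
    by (intro add_left_mono card_UN_le) simp
  also have "\<dots> \<le> 2 + 4 * 2"
    using \<open>card W \<le> 2\<close> sum_bounded_above[of "{1..4::nat}" "\<lambda>k. card (coal P k - {1..4})" 2]
      majority_split_minority_block[OF e e' split]
    by fastforce
  finally show False
    by simp
qed

lemma majority_block_cases:
  obtains "{5..15} \<in> P" | "insert 3 {5..15} \<in> P"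
proof -
  define G where "G = coal P 5"
  have G: "G \<in> P"
    using coal_in_partition[of 5] by (simp add: G_def)
  have majority_G: "{5..15} \<subseteq> G"
  proof
    fix e :: nat
    assume "e \<in> {5..15}"
    then have "coal P e = G" and "e \<in> {1..15}"
      using majority_together[of e 5] by (auto simp: G_def)
    then show "e \<in> G"
      using in_coal by blast
  qed
  then have "11 \<le> card G"
    using card_mono[OF finite_block[OF G] majority_G] by simp
  then have minority_not_in_G: "k \<notin> G" if "k \<in> {1, 2, 4}" for k
    using minority_card_le_3[OF that] coal_eq[OF partition G, of k] by auto
  have "G \<subseteq> insert 3 {5..15}"
  proof
    fix x
    assume "x \<in> G"
    then have "1 \<le> x" "x \<le> 15" "x \<noteq> 1" "x \<noteq> 2" "x \<noteq> 4"
      using block_subset[OF G] minority_not_in_G by auto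
    then show "x \<in> insert 3 {5..15}"
      unfolding insert_iff atLeastAtMost_iff by presburger
  qed
  then have "G = {5..15} \<or> G = insert 3 {5..15}"
    using majority_G by blast
  then show ?thesis
    using that G by blast
qed

lemma majority_with_3_not_block: "insert 3 {5..15} \<notin> P"
proof
  define G :: "nat set" where "G = insert 3 {5..15}"
  assume "insert 3 {5..15} \<in> P"
  then have G: "G \<in> P"
    by (simp add: G_def)
  have "card G = 12"
    by (simp add: G_def)
  have "welcoming pref15 G"
    unfolding welcoming_def pref15_def \<open>card G = 12\<close>
  proof
    fix j
    assume "j \<in> G"
    then consider "j = 3" | "j \<in> {5..15}"
      by (auto simp: G_def)
    then show "size_rank j (12 + 1) \<le> size_rank j 12"
      by cases (simp_all add: size_rank_majority, simp add: size_rank_def size_order_def position_def)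
  qed
  then have "size_rank 4 (card (coal P 4)) \<le> size_rank 4 (card G + 1)"
    using G by (intro no_welcoming_improvement) (auto simp: G_def)
  moreover have "size_rank 4 13 = 0"
    by (simp add: size_rank_def size_order_def position_def)
  ultimately have "card (coal P 4) = 13"
    using size_rank_inj[of "card (coal P 4)" 13 4] card_block[OF coal_in_partition[of 4]] \<open>card G = 12\<close>
    by simp
  then show False
    using minority_card_le_3[of 4] by simp
qed

lemma join_minority_block:
  assumes i: "i \<in> {1, 2, 4}" and C: "C \<in> P" "C \<subseteq> {1, 2, 4}" "i \<notin> C"
    and "card (coal P i) \<le> card C" and "card C \<le> 2"
  shows False
proof -
  have "i \<in> {1..15}"
    using i by auto
  have "welcoming pref15 C"
    using welcoming_minority_block[OF C(2)] card_block[OF C(1)] \<open>card C \<le> 2\<close> by simp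
  then have "size_rank i (card (coal P i)) \<le> size_rank i (card C + 1)"
    using no_welcoming_improvement[OF \<open>i \<in> {1..15}\<close> C(1) C(3)] by blast
  moreover have "size_rank i (card C + 1) < size_rank i (card (coal P i))"
    using size_rank_minority[OF i, of "card (coal P i)" "card C + 1"] assms(5,6)
      card_block[OF coal_in_partition[OF \<open>i \<in> {1..15}\<close>]]
    by simp
  ultimately show False
    by simp
qed

context
  assumes majority: "{5..15} \<in> P"
begin

lemma minority_coal_subset: "k \<in> {1..4} \<Longrightarrow> coal P k \<subseteq> {1..4}"
proof
  fix x
  assume "k \<in> {1..4}" and x: "x \<in> coal P k"
  then have "k \<in> {1..15} - {5..15}"
    by auto
  then have "coal P k \<inter> {5..15} = {}" and "coal P k \<subseteq> {1..15}"
    using coal_disjoint[OF partition majority] block_subset[OF coal_in_partition, of k] by auto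
  then have "x \<notin> {5..15}" and "x \<in> {1..15}"
    using x by blast+
  then show "x \<in> {1..4}"
    by auto
qed

lemma card_coal_3: "card (coal P 3) = 2 \<or> card (coal P 3) = 3"
proof -
  have "card (coal P 3) \<le> 4"
    using card_mono[OF _ minority_coal_subset[of 3]] by simp
  then have "card (coal P 3) \<le> 3"
    using card_coal_acceptable(3)[of 3] by auto
  moreover have "card (coal P 3) \<noteq> 1"
  proof
    assume "card (coal P 3) = 1"
    have "welcoming pref15 {5..15}"
      by (auto simp: welcoming_def pref15_def size_rank_majority)
    then have "size_rank 3 (card (coal P 3)) \<le> size_rank 3 (card {5..15::nat} + 1)"
      using majority by (intro no_welcoming_improvement) auto
    then show False
      using \<open>card (coal P 3) = 1\<close> by (simp add: size_rank_def size_order_def position_def)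
  qed
  ultimately show ?thesis
    using card_block[OF coal_in_partition, of 3] by auto
qed

lemma rest_subset: "{1..4} - coal P 3 \<subseteq> {1, 2, 4}"
proof
  fix x
  assume "x \<in> {1..4} - coal P 3"
  then have "1 \<le> x" "x \<le> 4" "x \<noteq> 3"
    using in_coal[of 3] by auto
  then show "x \<in> {1, 2, 4}"
    unfolding insert_iff empty_iff by presburger
qed

lemma card_rest: "card ({1..4} - coal P 3) = 4 - card (coal P 3)"
  using minority_coal_subset[of 3] by (simp add: card_Diff_subset finite_subset)

lemma coal_rest: "k \<in> {1..4} - coal P 3 \<Longrightarrow> coal P k \<subseteq> {1..4} - coal P 3"
  using minority_coal_subset[of k] coal_disjoint_coal[of 3 k] by auto

lemma rest_block: "y \<in> {1..4} - coal P 3 \<Longrightarrow> coal P y = {1..4} - coal P 3"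
proof (rule ccontr)
  define R where "R = {1..4} - coal P 3"
  assume "y \<in> {1..4} - coal P 3" and "coal P y \<noteq> {1..4} - coal P 3"
  then have "y \<in> R" and "coal P y \<subset> R" and "y \<in> {1..15}"
    using coal_rest[of y] by (auto simp: R_def)
  then obtain z where z: "z \<in> R" "z \<notin> coal P y"
    by blast
  then have "z \<in> {1, 2, 4}" and "z \<in> {1..15}"
    using rest_subset by (auto simp: R_def)
  have y_block: "coal P y \<in> P"
    using coal_in_partition[OF \<open>y \<in> {1..15}\<close>] .
  have "coal P z \<subseteq> R - coal P y"
    using coal_rest[of z] coal_disjoint_coal[OF \<open>y \<in> {1..15}\<close> \<open>z \<in> {1..15}\<close> z(2)] z(1)
    by (auto simp: R_def)
  then have "card (coal P z) \<le> card (R - coal P y)"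
    by (intro card_mono) (simp_all add: R_def)
  also have "\<dots> = card R - card (coal P y)"
    using \<open>coal P y \<subset> R\<close> finite_block[OF y_block] by (simp add: card_Diff_subset)
  finally have "card (coal P z) \<le> card R - card (coal P y)" .
  moreover have "card (coal P y) < card R"
    using \<open>coal P y \<subset> R\<close> by (simp add: R_def psubset_card_mono)
  moreover have "1 \<le> card (coal P y)" and "card R \<le> 2"
    using card_block[OF y_block] card_rest card_coal_3 by (auto simp: R_def)
  ultimately have "card (coal P z) \<le> card (coal P y)" and "card (coal P y) \<le> 2"
    by linarith+
  moreover have "coal P y \<subseteq> {1, 2, 4}"
    using \<open>coal P y \<subset> R\<close> rest_subset by (auto simp: R_def)
  ultimately show False
    using join_minority_block[OF \<open>z \<in> {1, 2, 4}\<close> y_block _ z(2)] by blast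
qed

lemma majority_not_alone: False
proof -
  define R where "R = {1..4} - coal P 3"
  have "card R \<noteq> 0"
    using card_rest card_coal_3 by (auto simp: R_def)
  then obtain y where "y \<in> R"
    by (metis card.empty ex_in_conv)
  then have R_block: "R \<in> P"
    using rest_block[of y] coal_in_partition[of y] rest_subset by (auto simp: R_def)
  show False
  proof (cases "card (coal P 3) = 3")
    case True
    then have "card R = 1"
      using card_rest by (simp add: R_def)
    then have "welcoming pref15 R"
      using welcoming_minority_block rest_subset by (simp add: R_def)
    then have "size_rank 3 (card (coal P 3)) \<le> size_rank 3 (card R + 1)"
      using R_block in_coal[of 3] by (intro no_welcoming_improvement) (auto simp: R_def)
    then show False
      using \<open>card R = 1\<close> True by (simp add: size_rank_def size_order_def position_def)
  next
    case False
    then have "card (coal P 3) = 2" and "card R = 2"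
      using card_coal_3 card_rest by (auto simp: R_def)
    have "\<not> coal P 3 \<subseteq> {3}"
      using card_mono[of "{3}" "coal P 3"] \<open>card (coal P 3) = 2\<close> by auto
    then obtain x where "x \<in> coal P 3" and "x \<noteq> 3"
      by blast
    then have "x \<in> {1, 2, 4}" and "coal P x = coal P 3" and "x \<notin> R"
      using minority_coal_subset[of 3] mem_coal_iff[of 3 x] by (auto simp: R_def)
    then show False
      using join_minority_block[of x R] R_block rest_subset \<open>card (coal P 3) = 2\<close> \<open>card R = 2\<close>
      by (simp add: R_def)
  qed
qed

end

lemma inconsistent: False
  by (cases rule: majority_block_cases) (use majority_not_alone majority_with_3_not_block in blast)+

end

lemma no_IS_partition15: "\<not> individually_stable 15 pref15 P"
proof
  assume "individually_stable 15 pref15 P"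
  then interpret IS_partition15 P
    by unfold_locales (auto simp: individually_stable_def agents_def)
  show False
    by (rule inconsistent)
qed

theorem proposition3p1:
  shows "\<exists>pref :: nat \<Rightarrow> nat \<Rightarrow> nat \<Rightarrow> bool.
           is_AHG 15 pref \<and> strict_prefs 15 pref \<and> gen_single_peaked 15 pref \<and>
           \<not> (\<exists>P. individually_stable 15 pref P)"
  using is_AHG_pref15 strict_prefs_pref15 gen_single_peaked_pref15 no_IS_partition15 by blast

end
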